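(* For every directed graph $G=(V,E)$ and every state $\mathcal{S}$ with no red nodes, the set function $A\mapsto\mathcal{F}_{\mathcal{S}}(A)$ on subsets $A\subseteq V\setminus\mathcal{S}^b$ is monotonically increasing (i.e. $\mathcal{F}_{\mathcal{S}}(A)\le\mathcal{F}_{\mathcal{S}}(A\cup\{v\})$) and submodular (i.e. for all $A\subseteq A'\subseteq V\setminus\mathcal{S}^b$ and $v\in V\setminus\mathcal{S}^b$, $\mathcal{F}_{\mathcal{S}}(A'\cup\{v\})-\mathcal{F}_{\mathcal{S}}(A')\le\mathcal{F}_{\mathcal{S}}(A\cup\{v\})-\mathcal{F}_{\mathcal{S}}(A)$).
   Context: A state is a map $\mathcal{S}:V\to\{b,r,u\}$ (blue, red, uncolored); colored means blue or red; $\mathcal{S}^b$ is the set of blue nodes. The \textsc{Random Pick} process from an initial state $\mathcal{S}_0$: in each round $t=1,2,\dots$, every node $v$ with at least one out-neighbor picks an out-neighbor $ps_t(v)$ uniformly at random, independently of all other picks; $\mathcal{S}_t(v)=\mathcal{S}_{t-1}(ps_t(v))$ if $\mathcal{S}_{t-1}(v)=u$ and $\mathcal{S}_{t-1}(ps_t(v))\ne u$, else $\mathcal{S}_t(v)=\mathcal{S}_{t-1}(v)$. It almost surely reaches a stable state (no uncolored node has a colored out-neighbor). For a state $\mathcal{S}$ with no red nodes and $A\subseteq V\setminus\mathcal{S}^b$, $\mathcal{F}_{\mathcal{S}}(A)$ is the expected number of red nodes in the final stable state of the process started from $\mathcal{S}$ with all nodes of $A$ recolored red. *)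

theory Defs
  imports "HOL-Probability.Probability"
begin

datatype color = Blue | Red | Uncolored

type_synonym 'a state = "'a \<Rightarrow> color"

definition out_nbrs :: "('a \<times> 'a) set \<Rightarrow> 'a \<Rightarrow> 'a set" where
  "out_nbrs E v = {w. (v, w) \<in> E}"

definition blue_nodes :: "'a set \<Rightarrow> 'a state \<Rightarrow> 'a set" where
  "blue_nodes V S = {v \<in> V. S v = Blue}"

definition rp_update :: "('a \<times> 'a) set \<Rightarrow> 'a state \<Rightarrow> ('a \<Rightarrow> 'a) \<Rightarrow> 'a state" where
  "rp_update E S p = (\<lambda>v. if S v = Uncolored \<and> out_nbrs E v \<noteq> {} \<and> S (p v) \<noteq> Uncolored
                           then S (p v) else S v)"

definition rp_round :: "'a set \<Rightarrow> ('a \<times> 'a) set \<Rightarrow> 'a state \<Rightarrow> 'a state pmf" where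
  "rp_round V E S = map_pmf (rp_update E S)
     (Pi_pmf {v \<in> V. out_nbrs E v \<noteq> {}} undefined (\<lambda>v. pmf_of_set (out_nbrs E v)))"

primrec rp_states :: "'a set \<Rightarrow> ('a \<times> 'a) set \<Rightarrow> 'a state \<Rightarrow> nat \<Rightarrow> 'a state pmf" where
  "rp_states V E S 0 = return_pmf S"
| "rp_states V E S (Suc t) = bind_pmf (rp_states V E S t) (rp_round V E)"

definition num_red :: "'a set \<Rightarrow> 'a state \<Rightarrow> real" where
  "num_red V S = real (card {v \<in> V. S v = Red})"

definition recolor_red :: "'a state \<Rightarrow> 'a set \<Rightarrow> 'a state" where
  "recolor_red S A = (\<lambda>v. if v \<in> A then Red else S v)"

text \<open>Expected number of red nodes in the final stable state: the limit, as the number of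
  rounds tends to infinity, of the expected number of red nodes after t rounds (the process
  is absorbed in a stable state almost surely and colours never change once assigned).\<close>
definition F_rp :: "'a set \<Rightarrow> ('a \<times> 'a) set \<Rightarrow> 'a state \<Rightarrow> 'a set \<Rightarrow> real" where
  "F_rp V E S A = lim (\<lambda>t. measure_pmf.expectation (rp_states V E (recolor_red S A) t) (num_red V))"

end

theory Submission
  imports Defs
begin

text \<open>Run the processes started from the seed sets A, A \<union> {v}, A' and A' \<union> {v} on the same
  random picks. A larger seed set can only turn nodes red, and at every node and every time
  the last run is red exactly where one of the two middle runs is; this relation between the
  four colours is preserved by every round. Counting red nodes pointwise gives the
  submodularity inequality for every realisation, hence in expectation after every number of
  rounds, hence in the limit, which exists because the expected number of red nodes is
  nondecreasing in time and bounded by the number of nodes.\<close>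

definition rp_picks :: "'a set \<Rightarrow> ('a \<times> 'a) set \<Rightarrow> ('a \<Rightarrow> 'a) pmf" where
  "rp_picks V E = Pi_pmf {v \<in> V. out_nbrs E v \<noteq> {}} undefined (\<lambda>v. pmf_of_set (out_nbrs E v))"

lemma rp_round_eq_map_rp_picks: "rp_round V E S = map_pmf (rp_update E S) (rp_picks V E)"
  unfolding rp_round_def rp_picks_def ..

primrec coupled_states ::
  "'a set \<Rightarrow> ('a \<times> 'a) set \<Rightarrow> ('i \<Rightarrow> 'a state) \<Rightarrow> nat \<Rightarrow> ('i \<Rightarrow> 'a state) pmf" where
  "coupled_states V E ss 0 = return_pmf ss"
| "coupled_states V E ss (Suc t) = bind_pmf (coupled_states V E ss t)
     (\<lambda>s. map_pmf (\<lambda>p i. rp_update E (s i) p) (rp_picks V E))"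

lemma map_pmf_coupled_states:
  "map_pmf (\<lambda>s. s i) (coupled_states V E ss t) = rp_states V E (ss i) t"
proof (induction t)
  case 0
  show ?case by simp
next
  case (Suc t)
  have "rp_states V E (ss i) (Suc t) = bind_pmf (map_pmf (\<lambda>s. s i) (coupled_states V E ss t)) (rp_round V E)"
    by (simp add: Suc)
  then show ?case
    by (simp add: bind_map_pmf map_bind_pmf map_pmf_comp rp_round_eq_map_rp_picks)
qed

lemma coupled_states_invariant:
  assumes init: "\<And>x. R (\<lambda>i. ss i x)"
    and step: "\<And>c c' b. R c \<Longrightarrow> R c' \<Longrightarrow>
                 R (\<lambda>i. if c i = Uncolored \<and> b \<and> c' i \<noteq> Uncolored then c' i else c i)"
    and "s \<in> set_pmf (coupled_states V E ss t)"
  shows "R (\<lambda>i. s i x)"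
  using assms(3)
proof (induction t arbitrary: s x)
  case 0
  then show ?case using init by simp
next
  case (Suc t)
  then obtain s0 p where "s0 \<in> set_pmf (coupled_states V E ss t)"
    and s: "s = (\<lambda>i. rp_update E (s0 i) p)"
    by auto
  with Suc.IH have "R (\<lambda>i. s0 i x)" "R (\<lambda>i. s0 i (p x))" by blast+
  then show ?case
    unfolding s rp_update_def by (rule step)
qed

definition expected_red :: "'a set \<Rightarrow> ('a \<times> 'a) set \<Rightarrow> 'a state \<Rightarrow> nat \<Rightarrow> real" where
  "expected_red V E S t = measure_pmf.expectation (rp_states V E S t) (num_red V)"

lemma F_rp_eq_lim_expected_red: "F_rp V E S A = lim (expected_red V E (recolor_red S A))"
  unfolding F_rp_def expected_red_def ..

lemma num_red_eq_sum:
  assumes "finite V"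
  shows "num_red V s = (\<Sum>x\<in>V. of_bool (s x = Red))"
  unfolding num_red_def of_bool_def sum.inter_filter[OF assms, symmetric] by simp

lemma num_red_nonneg: "0 \<le> num_red V s"
  by (simp add: num_red_def)

lemma num_red_le_card:
  assumes "finite V"
  shows "num_red V s \<le> card V"
  using assms by (simp add: num_red_def card_mono)

lemma integrable_num_red:
  assumes "finite V"
  shows "integrable (measure_pmf M) (\<lambda>x. num_red V (f x))"
  by (rule measure_pmf.integrable_const_bound[where B = "card V"])
     (auto simp: num_red_nonneg num_red_le_card[OF assms])

lemma sum_num_red_le:
  assumes "finite V"
    and "\<And>x. (\<Sum>i\<in>I. of_bool (s i x = Red)) \<le> (\<Sum>j\<in>J. of_bool (s j x = Red) :: real)"
  shows "(\<Sum>i\<in>I. num_red V (s i)) \<le> (\<Sum>j\<in>J. num_red V (s j))"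
  unfolding num_red_eq_sum[OF assms(1)]
  by (subst (1 2) sum.swap) (intro sum_mono assms(2))

lemma sum_expected_red_le:
  assumes "finite V"
    and "\<And>s. s \<in> set_pmf (coupled_states V E ss t) \<Longrightarrow>
           (\<Sum>i\<in>I. num_red V (s i)) \<le> (\<Sum>j\<in>J. num_red V (s j))"
  shows "(\<Sum>i\<in>I. expected_red V E (ss i) t) \<le> (\<Sum>j\<in>J. expected_red V E (ss j) t)"
proof -
  let ?C = "measure_pmf (coupled_states V E ss t)"
  have marginal: "expected_red V E (ss i) t = (\<integral>s. num_red V (s i) \<partial>?C)" for i
    by (simp add: expected_red_def map_pmf_coupled_states[symmetric])
  have "(\<Sum>i\<in>I. expected_red V E (ss i) t) = (\<integral>s. (\<Sum>i\<in>I. num_red V (s i)) \<partial>?C)"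
    by (simp add: marginal integrable_num_red[OF assms(1)])
  also have "\<dots> \<le> (\<integral>s. (\<Sum>j\<in>J. num_red V (s j)) \<partial>?C)"
    by (intro integral_mono_AE AE_pmfI assms(2))
       (simp_all add: integrable_num_red[OF assms(1)])
  also have "\<dots> = (\<Sum>j\<in>J. expected_red V E (ss j) t)"
    by (simp add: marginal integrable_num_red[OF assms(1)])
  finally show ?thesis .
qed

lemma expectation_le_bind_pmf:
  fixes f :: "'a \<Rightarrow> real"
  assumes bounded: "\<And>x. \<bar>f x\<bar> \<le> B"
    and mono: "\<And>x y. x \<in> set_pmf M \<Longrightarrow> y \<in> set_pmf (N x) \<Longrightarrow> f x \<le> f y"
  shows "measure_pmf.expectation M f \<le> measure_pmf.expectation (bind_pmf M N) f"
proof -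
  define P where "P = bind_pmf M (\<lambda>x. map_pmf (Pair x) (N x))"
  have fst: "map_pmf fst P = M"
    by (simp add: P_def map_bind_pmf map_pmf_comp bind_return_pmf')
  have snd: "map_pmf snd P = bind_pmf M N"
    by (simp add: P_def map_bind_pmf map_pmf_comp)
  have integrable: "integrable (measure_pmf P) (\<lambda>z. f (g z))" for g :: "'a \<times> 'a \<Rightarrow> 'a"
    by (rule measure_pmf.integrable_const_bound[where B = B]) (simp_all add: bounded)
  have "measure_pmf.expectation M f = measure_pmf.expectation P (\<lambda>z. f (fst z))"
    by (simp flip: fst)
  also have "\<dots> \<le> measure_pmf.expectation P (\<lambda>z. f (snd z))"
    by (intro integral_mono_AE AE_pmfI integrable) (auto simp: P_def mono)
  also have "\<dots> = measure_pmf.expectation (bind_pmf M N) f"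
    by (simp flip: snd)
  finally show ?thesis .
qed

lemma expected_red_Suc_ge:
  assumes "finite V"
  shows "expected_red V E S t \<le> expected_red V E S (Suc t)"
  unfolding expected_red_def rp_states.simps
proof (rule expectation_le_bind_pmf)
  show "\<bar>num_red V s\<bar> \<le> card V" for s
    by (simp add: num_red_nonneg num_red_le_card[OF assms])
  fix s s' assume "s' \<in> set_pmf (rp_round V E s)"
  then have "{x \<in> V. s x = Red} \<subseteq> {x \<in> V. s' x = Red}"
    by (auto simp: rp_round_def rp_update_def)
  then show "num_red V s \<le> num_red V s'"
    using assms by (simp add: num_red_def card_mono)
qed

lemma expected_red_convergent:
  assumes "finite V"
  shows "expected_red V E S \<longlonglongrightarrow> lim (expected_red V E S)"
proof -
  have "incseq (expected_red V E S)"
    by (rule incseq_SucI) (rule expected_red_Suc_ge[OF assms])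
  moreover have "expected_red V E S t \<le> card V" for t
    unfolding expected_red_def
    by (rule measure_pmf.integral_le_const)
       (simp_all add: num_red_le_card[OF assms] integrable_num_red[OF assms, where f = id, simplified])
  ultimately show ?thesis
    using incseq_convergent by (metis limI)
qed

lemma sum_lim_expected_red_le:
  assumes "finite V"
    and "\<And>t s. s \<in> set_pmf (coupled_states V E ss t) \<Longrightarrow>
           (\<Sum>i\<in>I. num_red V (s i)) \<le> (\<Sum>j\<in>J. num_red V (s j))"
  shows "(\<Sum>i\<in>I. lim (expected_red V E (ss i))) \<le> (\<Sum>j\<in>J. lim (expected_red V E (ss j)))"
proof (rule LIMSEQ_le)
  show "\<exists>N. \<forall>t\<ge>N. (\<Sum>i\<in>I. expected_red V E (ss i) t) \<le> (\<Sum>j\<in>J. expected_red V E (ss j) t)"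
    using sum_expected_red_le[OF assms(1) assms(2)] by auto
qed (intro tendsto_sum expected_red_convergent[OF assms(1)])+

text \<open>The colours c 0, c 1, c 2, c 3 of one node in the runs seeded with A, A \<union> {v}, A', A' \<union> {v}.\<close>

definition red_square :: "(nat \<Rightarrow> color) \<Rightarrow> bool" where
  "red_square c \<longleftrightarrow> c 1 \<in> {c 0, Red} \<and> c 2 \<in> {c 0, Red}
     \<and> c 3 = (if c 1 = Red \<or> c 2 = Red then Red else c 0)"

lemma red_square_update:
  assumes "red_square c" "red_square c'"
  shows "red_square (\<lambda>i. if c i = Uncolored \<and> b \<and> c' i \<noteq> Uncolored then c' i else c i)"
  using assms unfolding red_square_def by (auto split: if_splits)

lemma red_square_recolor_red:
  assumes "A \<subseteq> A'"
  shows "red_square (\<lambda>i. recolor_red S ([A, A \<union> {v}, A', A' \<union> {v}] ! i) x)"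
  using assms unfolding red_square_def recolor_red_def by auto

lemma red_square_count:
  assumes "red_square c"
  shows "(\<Sum>i\<in>{3, 0}. of_bool (c i = Red)) \<le> (\<Sum>i\<in>{1, 2}. of_bool (c i = Red) :: real)"
    and "(\<Sum>i\<in>{0}. of_bool (c i = Red)) \<le> (\<Sum>i\<in>{1}. of_bool (c i = Red) :: real)"
  using assms unfolding red_square_def by (auto simp del: sum_of_bool_eq)

lemma coupled_recolor_red_square:
  assumes "A \<subseteq> A'"
    and "s \<in> set_pmf (coupled_states V E (\<lambda>i. recolor_red S ([A, A \<union> {v}, A', A' \<union> {v}] ! i)) t)"
  shows "red_square (\<lambda>i. s i x)"
  by (rule coupled_states_invariant[OF red_square_recolor_red[OF assms(1)] red_square_update assms(2)])

lemma F_rp_submodular: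
  assumes "finite V" "A \<subseteq> A'"
  shows "F_rp V E S (A' \<union> {v}) - F_rp V E S A' \<le> F_rp V E S (A \<union> {v}) - F_rp V E S A"
proof -
  define ss where "ss = (\<lambda>i. recolor_red S ([A, A \<union> {v}, A', A' \<union> {v}] ! i))"
  have square: "red_square (\<lambda>i. s i x)" if "s \<in> set_pmf (coupled_states V E ss t)" for s t x
    using coupled_recolor_red_square[OF assms(2)] that unfolding ss_def .
  have "(\<Sum>i\<in>{3, 0}. lim (expected_red V E (ss i))) \<le> (\<Sum>j\<in>{1, 2}. lim (expected_red V E (ss j)))"
    by (intro sum_lim_expected_red_le assms(1) sum_num_red_le red_square_count(1) square)
  then show ?thesis
    by (simp add: ss_def F_rp_eq_lim_expected_red)
qed

lemma F_rp_mono_insert: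
  assumes "finite V"
  shows "F_rp V E S A \<le> F_rp V E S (A \<union> {v})"
proof -
  define ss where "ss = (\<lambda>i. recolor_red S ([A, A \<union> {v}, A, A \<union> {v}] ! i))"
  have square: "red_square (\<lambda>i. s i x)" if "s \<in> set_pmf (coupled_states V E ss t)" for s t x
    using coupled_recolor_red_square[OF order_refl] that unfolding ss_def .
  have "(\<Sum>i\<in>{0}. lim (expected_red V E (ss i))) \<le> (\<Sum>j\<in>{1}. lim (expected_red V E (ss j)))"
    by (intro sum_lim_expected_red_le assms(1) sum_num_red_le red_square_count(2) square)
  then show ?thesis
    by (simp add: ss_def F_rp_eq_lim_expected_red)
qed

theorem theorem2p2:
  fixes V :: "'a set" and E :: "('a \<times> 'a) set" and S :: "'a state"
  assumes "finite V" and "E \<subseteq> V \<times> V"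
    and "\<forall>v \<in> V. S v \<noteq> Red"
  shows "(\<forall>A v. A \<subseteq> V - blue_nodes V S \<and> v \<in> V - blue_nodes V S
            \<longrightarrow> F_rp V E S A \<le> F_rp V E S (A \<union> {v}))
       \<and> (\<forall>A A' v. A \<subseteq> A' \<and> A' \<subseteq> V - blue_nodes V S \<and> v \<in> V - blue_nodes V S
            \<longrightarrow> F_rp V E S (A' \<union> {v}) - F_rp V E S A'
                \<le> F_rp V E S (A \<union> {v}) - F_rp V E S A)"
  using F_rp_mono_insert[OF assms(1)] F_rp_submodular[OF assms(1)] by blast

end
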